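(* Let $b\ge3$, $D$, $C(b,D)$, $\gamma$, $A$, $I$, $\psi$, $\psi_A$, $\mu$, $r_0$, $LS_i^{\ast}$ be as in the context, and suppose $\psi_{A}(i) \leq b^{-i}/2$ for all $i\in I$. Let $B$ be an open ball centered at a point of $C(b,D)$ with radius $r(B) < r_0/2$, and put $LS_i^{\ast}(B) = B \cap LS_i^{\ast}$. Let $t_{0}$ be a sufficiently large integer satisfying $b^{-t_{0}} < r(B)$. Then there exists a constant $K>0$ such that for all $i, j \in I$ with $i>j>t_{0}$, $$\mu(LS_{i}^{\ast}(B) \cap LS_{j}^{\ast}(B)) \leq \frac{K}{\mu(B)}\, \mu(LS_{i}^{\ast}(B))\, \mu(LS_{j}^{\ast}(B)).$$
   Context: $b\ge3$ is an integer, $D\subset\{0,\ldots,b-1\}$ with $2\le\#D\le b-1$, $C(b,D)$ is the set of $x\in[0,1]$ whose base-$b$ expansion uses only digits from $D$, and $\gamma = \log\#D/\log b$. $\mu = \mathcal{H}^{\gamma}|_{C(b,D)}$ (the $\gamma$-dimensional Hausdorff measure restricted to $C(b,D)$), and $r_0>0$ is a constant such that $\mu(B(x,r)) \asymp r^{\gamma}$ (bounded above and below by constant multiples) for all $x\in C(b,D)$ and $0<r<r_0$. $B(x,r)$ denotes the open interval $(x-r,x+r)$, and a ball with non-positive radius is empty. $A=(a_n)_{n\ge1}$ is an unbounded non-decreasing sequence of positive integers, $\psi:\mathbb{N}\to(0,\infty)$, $I=\{i : a_n=i \text{ for some } n\}$, and $\psi_A(i)=\max\{\psi(n) : a_n=i\}$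 for $i\in I$. The $n$-th level $C_n(b,D) = \{\sum_{k\ge1}x_kb^{-k}\in[0,1] : x_k\in D, k=1,\ldots,n\}$ is a union of $(\#D)^n$ intervals of length $b^{-n}$, and $L_n$ is the set of their left endpoints. $m_l=\min D$, $d_{l,i} = m_l/((b-1)b^i)$. For $i\ge1$, $L_i^{\ast} = \{ p/b^i \in L_i : p/b^i + d_{l,i} \ne q/b^j + d_{l,j} \text{ for every integer } q \text{ and every } j<i\}$, and for $i\in I$, $LS_i^{\ast} = \bigcup_{p/b^i \in L_i^{\ast}} B\left(p/b^i + d_{l,i},\ \psi_A(i) - d_{l,i}\right)$. *)

theory Defs
  imports "HOL-Analysis.Analysis"
begin

definition hausdorff_pre :: "real \<Rightarrow> real \<Rightarrow> real set \<Rightarrow> ennreal" where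
  "hausdorff_pre s \<delta> E =
     (INF U \<in> {U :: nat \<Rightarrow> real set. E \<subseteq> (\<Union>n. U n) \<and>
                 (\<forall>n. bounded (U n) \<and> diameter (U n) \<le> \<delta>)}.
        (\<Sum>n. ennreal (diameter (U n) powr s)))"

definition hausdorff_measure :: "real \<Rightarrow> real set \<Rightarrow> ennreal" where
  "hausdorff_measure s E = (SUP \<delta> \<in> {0<..}. hausdorff_pre s \<delta> E)"

definition cantor_set :: "nat \<Rightarrow> nat set \<Rightarrow> real set" where
  "cantor_set b D = {(\<Sum>k. real (x k) / real b ^ Suc k) | x. \<forall>k. x k \<in> D}"

definition left_ends :: "nat \<Rightarrow> nat set \<Rightarrow> nat \<Rightarrow> real set" where
  "left_ends b D n = {(\<Sum>k=1..n. real (x k) / real b ^ k) | x. \<forall>k\<in>{1..n}. x k \<in> D}"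

definition dl :: "nat \<Rightarrow> nat set \<Rightarrow> nat \<Rightarrow> real" where
  "dl b D i = real (Min D) / ((real b - 1) * real b ^ i)"

definition left_ends_star :: "nat \<Rightarrow> nat set \<Rightarrow> nat \<Rightarrow> real set" where
  "left_ends_star b D i = {y \<in> left_ends b D i.
      \<forall>(q::int) j. 1 \<le> j \<and> j < i \<longrightarrow> y + dl b D i \<noteq> real_of_int q / real b ^ j + dl b D j}"

definition psiA :: "(nat \<Rightarrow> nat) \<Rightarrow> (nat \<Rightarrow> real) \<Rightarrow> nat \<Rightarrow> real" where
  "psiA a \<psi> i = Max (\<psi> ` {n. 1 \<le> n \<and> a n = i})"

definition LS_star :: "nat \<Rightarrow> nat set \<Rightarrow> (nat \<Rightarrow> nat) \<Rightarrow> (nat \<Rightarrow> real) \<Rightarrow> nat \<Rightarrow> real set" where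
  "LS_star b D a \<psi> i = (\<Union>y \<in> left_ends_star b D i. ball (y + dl b D i) (psiA a \<psi> i - dl b D i))"

end

theory Submission
  imports Defs
begin

text \<open>
  The centres p/b^i + d_{l,i} of the balls forming LS_i^* lie on the grid b^{-i} Z shifted
  by d_{l,i}, so they are b^{-i}-separated. The centres of every coarser level j < i lie on
  the same shifted grid, and membership in L_i^* says precisely that a level-i centre is
  none of them; so it is b^{-i}-far from all level-j centres as well.

  Ahlfors regularity turns counting into measure: a ball of radius R about a point of
  C(b,D) contains at most const (R/s)^gamma points that are s-separated. Hence
  B \<inter> LS_i^* \<inter> LS_j^* is covered by const (r b^j)^gamma (rho_j b^i)^gamma balls of radius
  rho_i = psi_A(i) - d_{l,i}. Conversely, every level-(k-1) interval meeting the ball of radius r/2 has a child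
  whose first new digit differs from min D, and the centre of that child lies in L_k^*;
  this gives const (r b^k)^gamma disjoint balls of radius rho_k/2 inside B \<inter> LS_k^*.
  Comparing both bounds with mu(B) ~ r^gamma yields K.
\<close>

section \<open>Hausdorff measure on the real line\<close>

definition delta_covers :: "real \<Rightarrow> real set \<Rightarrow> (nat \<Rightarrow> real set) set" where
  "delta_covers \<delta> E = {U. E \<subseteq> (\<Union>n. U n) \<and> (\<forall>n. bounded (U n) \<and> diameter (U n) \<le> \<delta>)}"

lemma hausdorff_pre_eq:
  "hausdorff_pre s \<delta> E = (INF U\<in>delta_covers \<delta> E. \<Sum>n. ennreal (diameter (U n) powr s))"
  unfolding hausdorff_pre_def delta_covers_def ..

lemma hausdorff_pre_mono: "A \<subseteq> B \<Longrightarrow> hausdorff_pre s \<delta> A \<le> hausdorff_pre s \<delta> B"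
  unfolding hausdorff_pre_eq delta_covers_def by (rule INF_superset_mono) auto

lemma hausdorff_pre_antimono: "\<delta> \<le> \<delta>' \<Longrightarrow> hausdorff_pre s \<delta>' A \<le> hausdorff_pre s \<delta> A"
  unfolding hausdorff_pre_eq delta_covers_def by (rule INF_superset_mono) (auto intro: order_trans)

lemma hausdorff_measure_mono: "A \<subseteq> B \<Longrightarrow> hausdorff_measure s A \<le> hausdorff_measure s B"
  unfolding hausdorff_measure_def by (rule SUP_mono) (auto intro: hausdorff_pre_mono)

lemma hausdorff_measure_empty [simp]: "hausdorff_measure s {} = 0"
proof -
  have "hausdorff_pre s \<delta> {} = 0" if "0 < \<delta>" for \<delta>
    using that unfolding hausdorff_pre_eq delta_covers_def
    by (intro antisym INF_lower2[of "\<lambda>_. {}"]) auto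
  then show ?thesis
    unfolding hausdorff_measure_def by (intro antisym SUP_least) auto
qed

lemma le_INF_add_INF_ennreal:
  fixes f g :: "'a \<Rightarrow> ennreal"
  assumes "\<And>x y. x \<in> X \<Longrightarrow> y \<in> Y \<Longrightarrow> c \<le> f x + g y"
  shows "c \<le> (INF x\<in>X. f x) + (INF y\<in>Y. g y)"
proof (cases "X = {} \<or> Y = {}")
  case True
  then show ?thesis by auto
next
  case False
  have cont: "continuous (at_right z) (\<lambda>w::ennreal. w + d)" "continuous (at_right z) (\<lambda>w::ennreal. d + w)"
    for z d by (auto intro: continuous_add)
  have "(INF x\<in>X. f x) + (INF y\<in>Y. g y) = (INF x\<in>X. f x + (INF y\<in>Y. g y))"
    using continuous_at_Inf_mono[of "\<lambda>w. w + (INF y\<in>Y. g y)" "f ` X"] cont False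
    by (auto simp: mono_def image_comp add_right_mono)
  also have "\<dots> = (INF x\<in>X. INF y\<in>Y. f x + g y)"
    using continuous_at_Inf_mono[of "\<lambda>w. f _ + w" "g ` Y"] cont False
    by (auto simp: mono_def image_comp add_left_mono intro!: INF_cong)
  finally show ?thesis using assms by (auto intro!: INF_greatest)
qed

lemma suminf_interleave_ennreal:
  fixes u v :: "nat \<Rightarrow> ennreal"
  shows "(\<Sum>n. if even n then u (n div 2) else v (n div 2)) = (\<Sum>n. u n) + (\<Sum>n. v n)"
proof -
  let ?w = "\<lambda>n. if even n then u (n div 2) else v (n div 2)"
  have "sum ?w {n * 2..<n * 2 + 2} = u n + v n" for n
  proof -
    have "{n * 2..<n * 2 + 2} = {2 * n, Suc (2 * n)}" by auto
    then show ?thesis by simp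
  qed
  moreover have "(\<lambda>n. sum ?w {n * 2..<n * 2 + 2}) sums (\<Sum>n. ?w n)"
    by (intro sums_group summable_sums) auto
  ultimately have "(\<lambda>n. u n + v n) sums (\<Sum>n. ?w n)"
    by simp
  then show ?thesis
    by (simp add: sums_unique[symmetric] suminf_add)
qed

lemma hausdorff_pre_Un_le:
  assumes "0 \<le> \<delta>"
  shows "hausdorff_pre s \<delta> (A \<union> B) \<le> hausdorff_pre s \<delta> A + hausdorff_pre s \<delta> B"
  unfolding hausdorff_pre_eq
proof (rule le_INF_add_INF_ennreal)
  fix U V assume U: "U \<in> delta_covers \<delta> A" and V: "V \<in> delta_covers \<delta> B"
  define W where "W n = (if even n then U (n div 2) else V (n div 2))" for n
  have "A \<subseteq> (\<Union>n. W n)"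
  proof
    fix x assume "x \<in> A"
    then obtain n where "x \<in> U n" using U by (auto simp: delta_covers_def)
    then show "x \<in> (\<Union>n. W n)" by (intro UN_I[of "2 * n"]) (auto simp: W_def)
  qed
  moreover have "B \<subseteq> (\<Union>n. W n)"
  proof
    fix x assume "x \<in> B"
    then obtain n where "x \<in> V n" using V by (auto simp: delta_covers_def)
    then show "x \<in> (\<Union>n. W n)" by (intro UN_I[of "Suc (2 * n)"]) (auto simp: W_def)
  qed
  ultimately have "W \<in> delta_covers \<delta> (A \<union> B)"
    using U V by (auto simp: delta_covers_def W_def)
  moreover have "(\<Sum>n. ennreal (diameter (W n) powr s))
      = (\<Sum>n. ennreal (diameter (U n) powr s)) + (\<Sum>n. ennreal (diameter (V n) powr s))"
  proof -
    have "(\<lambda>n. ennreal (diameter (W n) powr s)) = (\<lambda>n. if even n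
        then ennreal (diameter (U (n div 2)) powr s) else ennreal (diameter (V (n div 2)) powr s))"
      by (auto simp: W_def)
    then show ?thesis
      using suminf_interleave_ennreal[of "\<lambda>n. ennreal (diameter (U n) powr s)"
          "\<lambda>n. ennreal (diameter (V n) powr s)"] by simp
  qed
  ultimately show "(INF W\<in>delta_covers \<delta> (A \<union> B). \<Sum>n. ennreal (diameter (W n) powr s))
      \<le> (\<Sum>n. ennreal (diameter (U n) powr s)) + (\<Sum>n. ennreal (diameter (V n) powr s))"
    by (metis INF_lower)
qed

lemma hausdorff_measure_Un_le:
  "hausdorff_measure s (A \<union> B) \<le> hausdorff_measure s A + hausdorff_measure s B"
  unfolding hausdorff_measure_def
proof (rule SUP_least)
  fix \<delta> :: real assume "\<delta> \<in> {0<..}"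
  then have "hausdorff_pre s \<delta> (A \<union> B) \<le> hausdorff_pre s \<delta> A + hausdorff_pre s \<delta> B"
    by (intro hausdorff_pre_Un_le) auto
  also have "\<dots> \<le> (SUP \<delta>\<in>{0<..}. hausdorff_pre s \<delta> A) + (SUP \<delta>\<in>{0<..}. hausdorff_pre s \<delta> B)"
    using \<open>\<delta> \<in> {0<..}\<close> by (intro add_mono SUP_upper)
  finally show "hausdorff_pre s \<delta> (A \<union> B)
      \<le> (SUP \<delta>\<in>{0<..}. hausdorff_pre s \<delta> A) + (SUP \<delta>\<in>{0<..}. hausdorff_pre s \<delta> B)" .
qed

lemma hausdorff_measure_UN_le:
  assumes "finite S"
  shows "hausdorff_measure s (\<Union>c\<in>S. A c) \<le> (\<Sum>c\<in>S. hausdorff_measure s (A c))"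
  using assms
proof (induction S rule: finite_induct)
  case (insert c S)
  then show ?case
    using hausdorff_measure_Un_le[of s "A c" "\<Union>c\<in>S. A c"] by (auto intro: order_trans add_left_mono)
qed simp

lemma hausdorff_pre_Un_separated:
  assumes "0 \<le> \<delta>" "\<delta> < \<eta>" and sep: "\<And>x y. x \<in> A \<Longrightarrow> y \<in> B \<Longrightarrow> \<eta> \<le> dist x y"
  shows "hausdorff_pre s \<delta> A + hausdorff_pre s \<delta> B \<le> hausdorff_pre s \<delta> (A \<union> B)"
  unfolding hausdorff_pre_eq[of s \<delta> "A \<union> B"]
proof (rule INF_greatest)
  fix U assume U: "U \<in> delta_covers \<delta> (A \<union> B)"
  define UA where "UA n = (if U n \<inter> A \<noteq> {} then U n else {})" for n
  define UB where "UB n = (if U n \<inter> B \<noteq> {} then U n else {})" for n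
  have "UA \<in> delta_covers \<delta> A" "UB \<in> delta_covers \<delta> B"
    using U assms(1) by (auto simp: delta_covers_def UA_def UB_def) blast+
  then have "hausdorff_pre s \<delta> A + hausdorff_pre s \<delta> B
      \<le> (\<Sum>n. ennreal (diameter (UA n) powr s)) + (\<Sum>n. ennreal (diameter (UB n) powr s))"
    unfolding hausdorff_pre_eq by (intro add_mono INF_lower)
  also have "\<dots> = (\<Sum>n. ennreal (diameter (UA n) powr s) + ennreal (diameter (UB n) powr s))"
    by (rule suminf_add) auto
  also have "\<dots> \<le> (\<Sum>n. ennreal (diameter (U n) powr s))"
  proof (rule suminf_le)
    fix n
    \<comment> \<open>a set of diameter at most \<open>\<delta> < \<eta>\<close> cannot meet both \<open>A\<close> and \<open>B\<close>\<close>
    have "U n \<inter> A = {} \<or> U n \<inter> B = {}"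
    proof (rule ccontr)
      assume "\<not> ?thesis"
      then obtain x y where "x \<in> U n \<inter> A" "y \<in> U n \<inter> B" by auto
      then have "dist x y \<le> diameter (U n)"
        using U by (intro diameter_bounded_bound) (auto simp: delta_covers_def)
      also have "\<dots> \<le> \<delta>" using U by (auto simp: delta_covers_def)
      finally show False using sep \<open>x \<in> U n \<inter> A\<close> \<open>y \<in> U n \<inter> B\<close> assms(2) by force
    qed
    then show "ennreal (diameter (UA n) powr s) + ennreal (diameter (UB n) powr s)
        \<le> ennreal (diameter (U n) powr s)"
      unfolding UA_def UB_def by auto
  qed auto
  finally show "hausdorff_pre s \<delta> A + hausdorff_pre s \<delta> B \<le> (\<Sum>n. ennreal (diameter (U n) powr s))" .
qed

lemma hausdorff_measure_Un_separated:
  assumes "0 < \<eta>" and sep: "\<And>x y. x \<in> A \<Longrightarrow> y \<in> B \<Longrightarrow> \<eta> \<le> dist x y"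
  shows "hausdorff_measure s A + hausdorff_measure s B \<le> hausdorff_measure s (A \<union> B)"
proof -
  have pre: "hausdorff_pre s \<delta>1 A + hausdorff_pre s \<delta>2 B \<le> hausdorff_measure s (A \<union> B)"
    if "0 < \<delta>1" "0 < \<delta>2" for \<delta>1 \<delta>2
  proof -
    define \<delta> where "\<delta> = min (min \<delta>1 \<delta>2) (\<eta> / 2)"
    have \<delta>: "0 < \<delta>" "\<delta> \<le> \<delta>1" "\<delta> \<le> \<delta>2" "\<delta> < \<eta>"
      using that assms(1) by (auto simp: \<delta>_def)
    have "hausdorff_pre s \<delta>1 A + hausdorff_pre s \<delta>2 B \<le> hausdorff_pre s \<delta> A + hausdorff_pre s \<delta> B"
      using \<delta> by (intro add_mono hausdorff_pre_antimono)
    also have "\<dots> \<le> hausdorff_pre s \<delta> (A \<union> B)"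
      using \<delta> sep by (intro hausdorff_pre_Un_separated) auto
    also have "\<dots> \<le> hausdorff_measure s (A \<union> B)"
      unfolding hausdorff_measure_def using \<delta> by (intro SUP_upper) auto
    finally show ?thesis .
  qed
  have "hausdorff_measure s A + hausdorff_measure s B
      = (SUP \<delta>1\<in>{0<..}. SUP \<delta>2\<in>{0<..}. hausdorff_pre s \<delta>1 A + hausdorff_pre s \<delta>2 B)"
    unfolding hausdorff_measure_def
    by (simp add: ennreal_SUP_add_left[symmetric] ennreal_SUP_add_right[symmetric])
  also have "\<dots> \<le> hausdorff_measure s (A \<union> B)"
    using pre by (auto intro!: SUP_least)
  finally show ?thesis .
qed

lemma hausdorff_measure_UN_separated:
  assumes "finite S" "0 < \<eta>"
    and sep: "\<And>c c' x y. c \<in> S \<Longrightarrow> c' \<in> S \<Longrightarrow> c \<noteq> c' \<Longrightarrow> x \<in> A c \<Longrightarrow> y \<in> A c' \<Longrightarrow> \<eta> \<le> dist x y"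
  shows "(\<Sum>c\<in>S. hausdorff_measure s (A c)) \<le> hausdorff_measure s (\<Union>c\<in>S. A c)"
  using assms
proof (induction S rule: finite_induct)
  case (insert c S)
  have "(\<Sum>c\<in>insert c S. hausdorff_measure s (A c))
      \<le> hausdorff_measure s (A c) + hausdorff_measure s (\<Union>c\<in>S. A c)"
    using insert by (auto intro: add_left_mono)
  also have "\<dots> \<le> hausdorff_measure s (A c \<union> (\<Union>c\<in>S. A c))"
    using insert.prems(2) insert.hyps(2)
    by (intro hausdorff_measure_Un_separated[OF \<open>0 < \<eta>\<close>]) blast
  finally show ?case by simp
qed simp

section \<open>Base-\<open>b\<close> expansions\<close>

lemma left_ends_eq:
  "left_ends b D n = {(\<Sum>i<n. real (x i) / real b ^ Suc i) | x. \<forall>i<n. x i \<in> D}"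
proof -
  have shift: "(\<Sum>k=1..n. real (x k) / real b ^ k) = (\<Sum>i<n. real (x (Suc i)) / real b ^ Suc i)" for x
    by (simp add: sum.atLeast1_atMost_eq)
  show ?thesis
  proof (intro set_eqI iffI)
    fix y assume "y \<in> left_ends b D n"
    then obtain x where "y = (\<Sum>k=1..n. real (x k) / real b ^ k)" "\<forall>k\<in>{1..n}. x k \<in> D"
      unfolding left_ends_def by auto
    then have "y = (\<Sum>i<n. real (x (Suc i)) / real b ^ Suc i)" "\<forall>i<n. x (Suc i) \<in> D"
      by (simp_all only: shift) auto
    then show "y \<in> {(\<Sum>i<n. real (x i) / real b ^ Suc i) | x. \<forall>i<n. x i \<in> D}"
      by (intro CollectI exI[of _ "\<lambda>i. x (Suc i)"]) simp
  next
    fix y assume "y \<in> {(\<Sum>i<n. real (x i) / real b ^ Suc i) | x. \<forall>i<n. x i \<in> D}"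
    then obtain x where "y = (\<Sum>i<n. real (x i) / real b ^ Suc i)" "\<forall>i<n. x i \<in> D" by auto
    then show "y \<in> left_ends b D n"
      unfolding left_ends_def using shift[of "\<lambda>k. x (k - 1)"]
      by (intro CollectI exI[of _ "\<lambda>k. x (k - 1)"]) auto
  qed
qed

lemma finite_left_ends:
  assumes "finite D"
  shows "finite (left_ends b D n)"
proof -
  have "left_ends b D n \<subseteq> (\<lambda>x. \<Sum>i<n. real (x i) / real b ^ Suc i) ` (\<Pi>\<^sub>E i\<in>{..<n}. D)"
  proof
    fix y assume "y \<in> left_ends b D n"
    then obtain x where x: "y = (\<Sum>i<n. real (x i) / real b ^ Suc i)" "\<forall>i<n. x i \<in> D"
      unfolding left_ends_eq by auto
    then have "y = (\<Sum>i<n. real (restrict x {..<n} i) / real b ^ Suc i)"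
      by simp
    moreover have "restrict x {..<n} \<in> (\<Pi>\<^sub>E i\<in>{..<n}. D)"
      using x by auto
    ultimately show "y \<in> (\<lambda>x. \<Sum>i<n. real (x i) / real b ^ Suc i) ` (\<Pi>\<^sub>E i\<in>{..<n}. D)"
      by blast
  qed
  moreover have "finite (\<Pi>\<^sub>E i\<in>{..<n}. D)"
    using assms by (intro finite_PiE) auto
  ultimately show ?thesis
    by (meson finite_surj)
qed

lemma left_ends_Suc:
  assumes "y \<in> left_ends b D n" "d \<in> D"
  shows "y + real d / real b ^ Suc n \<in> left_ends b D (Suc n)"
proof -
  obtain x where x: "y = (\<Sum>i<n. real (x i) / real b ^ Suc i)" "\<forall>i<n. x i \<in> D"
    using assms unfolding left_ends_eq by auto
  have "y + real d / real b ^ Suc n = (\<Sum>i<Suc n. real ((x(n := d)) i) / real b ^ Suc i)"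
    unfolding x by simp
  moreover have "\<forall>i<Suc n. (x(n := d)) i \<in> D"
    using x assms(2) by (auto simp: less_Suc_eq)
  ultimately show ?thesis
    unfolding left_ends_eq by blast
qed

lemma left_ends_on_grid:
  assumes "0 < b" "y \<in> left_ends b D n"
  shows "\<exists>p::int. y = real_of_int p / real b ^ n"
proof -
  obtain x where x: "y = (\<Sum>i<n. real (x i) / real b ^ Suc i)"
    using assms unfolding left_ends_eq by auto
  have "real (x i) / real b ^ Suc i = real (x i * b ^ (n - Suc i)) / real b ^ n" if "i < n" for i
  proof -
    have "real b ^ n = real b ^ Suc i * real b ^ (n - Suc i)"
      using that by (metis Suc_leI le_add_diff_inverse power_add)
    then show ?thesis
      using assms(1) by (simp add: field_simps)
  qed
  then have "y = real (\<Sum>i<n. x i * b ^ (n - Suc i)) / real b ^ n"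
    unfolding x sum_divide_distrib of_nat_sum by (intro sum.cong) auto
  then show ?thesis
    by (metis of_int_of_nat_eq)
qed

lemma dl_nonneg: "0 < b \<Longrightarrow> 0 \<le> dl b D k"
  unfolding dl_def by (auto intro!: divide_nonneg_nonneg)

lemma real_le_minus_one_of_less: "n < b \<Longrightarrow> real n \<le> real b - 1"
  using of_nat_le_iff[of "Suc n" b] by simp

lemma dl_le_inverse_power:
  assumes "2 \<le> b" "D \<subseteq> {0..<b}" "D \<noteq> {}"
  shows "dl b D k \<le> 1 / real b ^ k"
proof -
  have "finite D"
    using assms(2) finite_subset by blast
  then have "real (Min D) \<le> real b - 1"
    using assms(2,3) Min_in by (intro real_le_minus_one_of_less) fastforce
  then have "(1 + real (Min D)) * real b ^ k \<le> real b * real b ^ k"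
    by (intro mult_right_mono) auto
  then show ?thesis
    unfolding dl_def using assms(1) by (simp add: field_simps)
qed

lemma sums_geometric_tail:
  assumes "2 \<le> b"
  shows "(\<lambda>i. c / real b ^ Suc (i + n)) sums (c / ((real b - 1) * real b ^ n))"
proof -
  have "(\<lambda>i. (1 / real b) ^ i) sums (1 / (1 - 1 / real b))"
    using assms by (intro geometric_sums) auto
  from sums_mult[OF this, of "c / real b ^ Suc n"]
  have "(\<lambda>i. c / real b ^ Suc n * (1 / real b) ^ i) sums (c / real b ^ Suc n * (1 / (1 - 1 / real b)))" .
  moreover have "c / real b ^ Suc n * (1 / real b) ^ i = c / real b ^ Suc (i + n)" for i
    by (simp add: power_add power_one_over)
  moreover have "c / real b ^ Suc n * (1 / (1 - 1 / real b)) = c / ((real b - 1) * real b ^ n)"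
    using assms by (simp add: field_simps)
  ultimately show ?thesis
    by (simp only:)
qed

lemma inverse_power_antimono: "1 \<le> b \<Longrightarrow> m \<le> n \<Longrightarrow> 1 / real b ^ n \<le> 1 / real b ^ m"
  by (intro divide_left_mono power_increasing) auto

lemma left_ends_plus_dl_in_cantor_set:
  assumes "2 \<le> b" "D \<noteq> {}" "finite D" "y \<in> left_ends b D n"
  shows "y + dl b D n \<in> cantor_set b D"
proof -
  obtain x where x: "y = (\<Sum>i<n. real (x i) / real b ^ Suc i)" "\<forall>i<n. x i \<in> D"
    using assms(4) unfolding left_ends_eq by auto
  \<comment> \<open>\<open>y + dl b D n\<close> is the point of the level-\<open>n\<close> interval at \<open>y\<close> whose later digits are all \<open>Min D\<close>\<close>
  define x' where "x' i = (if i < n then x i else Min D)" for i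
  have "(\<lambda>i. real (x' (i + n)) / real b ^ Suc (i + n)) sums dl b D n"
    unfolding dl_def x'_def using sums_geometric_tail[OF assms(1), of "real (Min D)" n] by simp
  then have "(\<lambda>i. real (x' i) / real b ^ Suc i) sums (dl b D n + (\<Sum>i<n. real (x' i) / real b ^ Suc i))"
    by (rule sums_iff_shift[THEN iffD1])
  moreover have "(\<Sum>i<n. real (x' i) / real b ^ Suc i) = y"
    unfolding x x'_def by simp
  moreover have "\<forall>k. x' k \<in> D"
    using x assms(2,3) by (auto simp: x'_def)
  ultimately show ?thesis
    unfolding cantor_set_def by (auto simp: sums_iff add.commute intro!: exI[of _ x'])
qed

lemma cantor_set_near_left_end:
  assumes "2 \<le> b" "D \<subseteq> {0..<b}" "x \<in> cantor_set b D"
  shows "\<exists>y\<in>left_ends b D n. y \<le> x \<and> x \<le> y + 1 / real b ^ n"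
proof -
  obtain d where d: "x = (\<Sum>k. real (d k) / real b ^ Suc k)" "\<forall>k. d k \<in> D"
    using assms(3) unfolding cantor_set_def by auto
  have tail_le: "real (d (i + n)) / real b ^ Suc (i + n) \<le> (real b - 1) / real b ^ Suc (i + n)" for i
    using d(2) assms(2) by (intro divide_right_mono real_le_minus_one_of_less) auto
  have tail_max: "(\<lambda>i. (real b - 1) / real b ^ Suc (i + n)) sums (1 / real b ^ n)"
    using sums_geometric_tail[OF assms(1), of "real b - 1" n] assms(1) by simp
  have tail_summable: "summable (\<lambda>i. real (d (i + n)) / real b ^ Suc (i + n))"
    using tail_le by (intro summable_comparison_test[OF _ sums_summable[OF tail_max]]) auto
  then have "summable (\<lambda>i. real (d i) / real b ^ Suc i)"
    using summable_iff_shift[of "\<lambda>i. real (d i) / real b ^ Suc i" n] by (simp only:)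
  define t where "t = (\<Sum>i. real (d (i + n)) / real b ^ Suc (i + n))"
  have "x = t + (\<Sum>i<n. real (d i) / real b ^ Suc i)"
    unfolding d t_def by (rule suminf_split_initial_segment) fact
  moreover have "0 \<le> t"
    unfolding t_def by (intro suminf_nonneg tail_summable) auto
  moreover have "t \<le> 1 / real b ^ n"
    unfolding t_def sums_unique[OF tail_max]
    by (intro suminf_le tail_le tail_summable sums_summable[OF tail_max])
  moreover have "(\<Sum>i<n. real (d i) / real b ^ Suc i) \<in> left_ends b D n"
    unfolding left_ends_eq using d(2) by auto
  ultimately show ?thesis
    by (intro bexI[of _ "\<Sum>i<n. real (d i) / real b ^ Suc i"]) auto
qed

lemma dl_diff:
  assumes "2 \<le> b" "j \<le> i"
  shows "dl b D j - dl b D i = real (Min D) * (\<Sum>t<i - j. real b ^ t) / real b ^ i"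
proof -
  define e where "e = i - j"
  have i: "real b ^ i = real b ^ j * real b ^ e"
    using assms(2) by (simp add: e_def flip: power_add)
  have b: "real b - 1 \<noteq> 0" "real b ^ j \<noteq> 0" "real b ^ e \<noteq> 0"
    using assms(1) by auto
  have "dl b D j = real (Min D) * real b ^ e / ((real b - 1) * real b ^ i)"
    unfolding dl_def i using b assms(1) by simp
  then have "dl b D j - dl b D i = real (Min D) * (real b ^ e - 1) / ((real b - 1) * real b ^ i)"
    unfolding dl_def by (simp add: diff_divide_distrib right_diff_distrib)
  also have "real b ^ e - 1 = (\<Sum>t<e. real b ^ t) * (real b - 1)"
    by (simp add: sum_gp_strict field_simps)
  finally show ?thesis
    using b by (simp add: e_def)
qed

lemma grid_separated:
  fixes h :: real
  assumes "0 < h" "of_int p / h \<noteq> of_int q / h"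
  shows "1 / h \<le> \<bar>of_int p / h - of_int q / h\<bar>"
proof -
  have "1 \<le> \<bar>real_of_int (p - q)\<bar>"
    using assms(2) by auto
  then show ?thesis
    using assms(1) by (simp add: diff_divide_distrib[symmetric] abs_divide divide_right_mono)
qed

lemma grid_plus_dl_diff:
  assumes "2 \<le> b" "j \<le> i"
  shows "real_of_int q / real b ^ j + dl b D j - dl b D i
    = real_of_int (q * int b ^ (i - j) + int (Min D) * (\<Sum>t<i - j. int b ^ t)) / real b ^ i"
proof -
  have "real b ^ i = real b ^ j * real b ^ (i - j)"
    using assms(2) by (simp flip: power_add)
  then have "real_of_int q / real b ^ j = real_of_int (q * int b ^ (i - j)) / real b ^ i"
    using assms(1) by simp
  then show ?thesis
    using dl_diff[OF assms] by (simp add: add_divide_distrib)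
qed

lemma left_ends_Suc_in_left_ends_star:
  assumes b: "2 \<le> b" and D: "D \<subseteq> {0..<b}" and y: "y \<in> left_ends b D k"
    and d: "d \<in> D" "d \<noteq> Min D"
  shows "y + real d / real b ^ Suc k \<in> left_ends_star b D (Suc k)"
  unfolding left_ends_star_def
proof (intro CollectI conjI allI impI notI)
  show "y + real d / real b ^ Suc k \<in> left_ends b D (Suc k)"
    using left_ends_Suc[OF y d(1)] .
  fix q :: int and j assume j: "1 \<le> j \<and> j < Suc k"
  assume eq: "y + real d / real b ^ Suc k + dl b D (Suc k) = real_of_int q / real b ^ j + dl b D j"
  obtain p where p: "y = real_of_int p / real b ^ k"
    using left_ends_on_grid[OF _ y] b by auto
  obtain e where e: "Suc k - j = Suc e"
    using j by (metis Suc_diff_Suc)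
  define G where "G = (\<Sum>t<e. int b ^ t)"
  have "real_of_int (p * int b + int d) / real b ^ Suc k = y + real d / real b ^ Suc k"
    unfolding p using b by (simp add: add_divide_distrib)
  also have "\<dots> = real_of_int q / real b ^ j + dl b D j - dl b D (Suc k)"
    using eq by linarith
  also have "\<dots> = real_of_int (q * int b ^ (Suc k - j) + int (Min D) * (\<Sum>t<Suc k - j. int b ^ t))
      / real b ^ Suc k"
    using b j by (intro grid_plus_dl_diff) auto
  also have "(\<Sum>t<Suc k - j. int b ^ t) = 1 + int b * G"
    unfolding e G_def by (simp add: sum.lessThan_Suc_shift sum_distrib_left del: sum.lessThan_Suc)
  finally have "real_of_int (p * int b + int d)
      = real_of_int (q * int b ^ Suc e + int (Min D) * (1 + int b * G))"
    unfolding e using b by simp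
  then have "p * int b + int d = q * int b ^ Suc e + int (Min D) * (1 + int b * G)"
    by (simp only: of_int_eq_iff)
  then have "int d - int (Min D) = int b * (q * int b ^ e + int (Min D) * G - p)"
    by (simp add: algebra_simps)
  \<comment> \<open>two different digits are not congruent modulo \<open>b\<close>\<close>
  then have "int b dvd int d - int (Min D)"
    by simp
  then have "\<bar>int b\<bar> \<le> \<bar>int d - int (Min D)\<bar>"
    using d(2) by (intro dvd_imp_le_int) auto
  moreover have "Min D \<in> D"
    using D d(1) by (intro Min_in) (auto intro: finite_subset)
  moreover have "d < b" "Min D < b"
    using D d(1) \<open>Min D \<in> D\<close> by auto
  ultimately show False
    by linarith
qed

lemma child_offset_bounds:
  assumes "2 \<le> b" "D \<subseteq> {0..<b}" "d \<in> D"
  shows "0 \<le> real d / real b ^ Suc k + dl b D (Suc k)"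
    and "real d / real b ^ Suc k + dl b D (Suc k) \<le> 1 / real b ^ k"
proof -
  define h where "h = 1 / real b ^ Suc k"
  have "real d \<le> real b - 1"
    using assms(2,3) by (intro real_le_minus_one_of_less) auto
  then have "real d / real b ^ Suc k \<le> (real b - 1) * h"
    unfolding h_def by (simp add: divide_right_mono)
  moreover have "0 \<le> dl b D (Suc k)" "dl b D (Suc k) \<le> h"
    unfolding h_def using assms dl_nonneg[of b D "Suc k"] dl_le_inverse_power[of b D "Suc k"] by auto
  moreover have "real b * h = 1 / real b ^ k"
    using assms(1) by (simp add: h_def)
  ultimately show "0 \<le> real d / real b ^ Suc k + dl b D (Suc k)"
    and "real d / real b ^ Suc k + dl b D (Suc k) \<le> 1 / real b ^ k"
    by (auto simp: algebra_simps)
qed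

definition star_centres :: "nat \<Rightarrow> nat set \<Rightarrow> nat \<Rightarrow> real set" where
  "star_centres b D k = (\<lambda>y. y + dl b D k) ` left_ends_star b D k"

lemma LS_star_eq:
  "LS_star b D a \<psi> k = (\<Union>c\<in>star_centres b D k. ball c (psiA a \<psi> k - dl b D k))"
  unfolding LS_star_def star_centres_def by auto

lemma finite_star_centres: "finite D \<Longrightarrow> finite (star_centres b D k)"
  unfolding star_centres_def left_ends_star_def using finite_left_ends by auto

lemma star_centres_subset_cantor_set:
  "2 \<le> b \<Longrightarrow> D \<noteq> {} \<Longrightarrow> finite D \<Longrightarrow> star_centres b D k \<subseteq> cantor_set b D"
  unfolding star_centres_def left_ends_star_def by (auto intro: left_ends_plus_dl_in_cantor_set)

lemma star_centres_separated:
  assumes "0 < b" "c \<in> star_centres b D k" "c' \<in> star_centres b D k" "c \<noteq> c'"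
  shows "1 / real b ^ k \<le> \<bar>c - c'\<bar>"
proof -
  obtain y y' where y: "y \<in> left_ends b D k" "y' \<in> left_ends b D k"
    and c: "c = y + dl b D k" "c' = y' + dl b D k"
    using assms(2,3) unfolding star_centres_def left_ends_star_def by auto
  obtain p q where "y = real_of_int p / real b ^ k" "y' = real_of_int q / real b ^ k"
    using left_ends_on_grid[OF assms(1)] y by metis
  then show ?thesis
    using grid_separated[of "real b ^ k" p q] assms(1,4) c by auto
qed

lemma star_centres_separated_levels:
  assumes "2 \<le> b" "1 \<le> j" "j < i" "c \<in> star_centres b D i" "c' \<in> star_centres b D j"
  shows "1 / real b ^ i \<le> \<bar>c - c'\<bar>"
proof -
  obtain y where y: "y \<in> left_ends_star b D i" "c = y + dl b D i"
    using assms(4) unfolding star_centres_def by auto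
  obtain y' where y': "y' \<in> left_ends b D j" "c' = y' + dl b D j"
    using assms(5) unfolding star_centres_def left_ends_star_def by auto
  obtain p where p: "y = real_of_int p / real b ^ i"
    using left_ends_on_grid y(1) assms(1) unfolding left_ends_star_def by fastforce
  obtain q where q: "y' = real_of_int q / real b ^ j"
    using left_ends_on_grid y'(1) assms(1) by fastforce
  define N where "N = q * int b ^ (i - j) + int (Min D) * (\<Sum>t<i - j. int b ^ t)"
  have c': "c' - dl b D i = real_of_int N / real b ^ i"
    unfolding N_def y'(2) q using grid_plus_dl_diff[OF assms(1), of j i q D] assms(3) by simp
  \<comment> \<open>\<open>c \<noteq> c'\<close> is exactly what membership in \<open>L\<^sup>*\<^sub>i\<close> excludes\<close>
  have "c \<noteq> c'"
    using y(1) assms(2,3) unfolding left_ends_star_def y(2) y'(2) q by auto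
  then have "real_of_int p / real b ^ i \<noteq> real_of_int N / real b ^ i"
    using y(2) c' p by linarith
  then have "1 / real b ^ i \<le> \<bar>real_of_int p / real b ^ i - real_of_int N / real b ^ i\<bar>"
    using assms(1) by (intro grid_separated) auto
  then show ?thesis
    using y(2) c' p by simp
qed

section \<open>Ahlfors-regular sets\<close>

lemma ennreal_divide_mult_mult_le:
  assumes "0 \<le> K" "0 < m" "0 \<le> x" "0 \<le> y" "ennreal x \<le> X" "ennreal y \<le> Y"
  shows "ennreal (K / m * x * y) \<le> ennreal K / ennreal m * X * Y"
proof -
  have "ennreal (K / m * x * y) = ennreal K / ennreal m * ennreal x * ennreal y"
    using assms(1-4) by (simp add: ennreal_mult divide_ennreal del: times_divide_eq_left)
  also have "\<dots> \<le> ennreal K / ennreal m * X * Y"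
    using assms(5,6) by (intro mult_mono) auto
  finally show ?thesis .
qed

locale ahlfors_regular =
  fixes C :: "real set" and \<gamma> r0 c1 c2 :: real
  assumes c1_pos: "0 < c1" and c2_pos: "0 < c2"
    and measure_ball_ge: "\<And>x \<rho>. x \<in> C \<Longrightarrow> 0 < \<rho> \<Longrightarrow> \<rho> < r0 \<Longrightarrow>
          ennreal (c1 * \<rho> powr \<gamma>) \<le> hausdorff_measure \<gamma> (ball x \<rho> \<inter> C)"
    and measure_ball_le: "\<And>x \<rho>. x \<in> C \<Longrightarrow> 0 < \<rho> \<Longrightarrow> \<rho> < r0 \<Longrightarrow>
          hausdorff_measure \<gamma> (ball x \<rho> \<inter> C) \<le> ennreal (c2 * \<rho> powr \<gamma>)"
begin

abbreviation \<mu> :: "real set \<Rightarrow> ennreal" where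
  "\<mu> X \<equiv> hausdorff_measure \<gamma> (X \<inter> C)"

lemma measure_ball_eq_ennreal:
  assumes "x \<in> C" "0 < \<rho>" "\<rho> < r0"
  obtains m where "\<mu> (ball x \<rho>) = ennreal m" "c1 * \<rho> powr \<gamma> \<le> m" "m \<le> c2 * \<rho> powr \<gamma>"
proof -
  have lower: "ennreal (c1 * \<rho> powr \<gamma>) \<le> \<mu> (ball x \<rho>)" and upper: "\<mu> (ball x \<rho>) \<le> ennreal (c2 * \<rho> powr \<gamma>)"
    using measure_ball_ge measure_ball_le assms by auto
  define m where "m = enn2real (\<mu> (ball x \<rho>))"
  have m_eq: "\<mu> (ball x \<rho>) = ennreal m"
    unfolding m_def using le_less_trans[OF upper ennreal_less_top] by simp
  have "0 \<le> m"
    by (simp add: m_def)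
  then show ?thesis
    using that m_eq lower upper c2_pos unfolding m_eq by simp
qed

lemma card_mult_le_measure_UN_balls:
  assumes S: "finite S" "S \<subseteq> C"
    and sep: "\<And>c c'. c \<in> S \<Longrightarrow> c' \<in> S \<Longrightarrow> c \<noteq> c' \<Longrightarrow> \<sigma> \<le> \<bar>c - c'\<bar>"
    and \<rho>: "0 < \<rho>" "2 * \<rho> < \<sigma>" "\<rho> < r0"
  shows "ennreal (real (card S) * (c1 * \<rho> powr \<gamma>)) \<le> \<mu> (\<Union>c\<in>S. ball c \<rho>)"
proof -
  have "ennreal (real (card S) * (c1 * \<rho> powr \<gamma>)) = (\<Sum>c\<in>S. ennreal (c1 * \<rho> powr \<gamma>))"
    using c1_pos by (simp add: ennreal_mult ennreal_of_nat_eq_real_of_nat)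
  also have "\<dots> \<le> (\<Sum>c\<in>S. \<mu> (ball c \<rho>))"
    using S \<rho> by (intro sum_mono measure_ball_ge) auto
  also have "\<dots> \<le> hausdorff_measure \<gamma> (\<Union>c\<in>S. ball c \<rho> \<inter> C)"
  proof (rule hausdorff_measure_UN_separated[OF S(1), of "\<sigma> - 2 * \<rho>"])
    fix c c' x y assume "c \<in> S" "c' \<in> S" "c \<noteq> c'" "x \<in> ball c \<rho> \<inter> C" "y \<in> ball c' \<rho> \<inter> C"
    then have "dist c x < \<rho>" "dist c' y < \<rho>" "\<sigma> \<le> \<bar>c - c'\<bar>"
      using sep by auto
    then show "\<sigma> - 2 * \<rho> \<le> dist x y"
      unfolding dist_real_def by linarith
  qed (use \<rho> in auto)
  finally show ?thesis
    by (simp add: Int_UN_distrib2)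
qed

lemma measure_le_card_mult:
  assumes Y: "finite Y" "Y \<subseteq> C" and cover: "X \<inter> C \<subseteq> (\<Union>c\<in>Y. ball c R)" and R: "0 < R" "R < r0"
  shows "\<mu> X \<le> ennreal (real (card Y) * (c2 * R powr \<gamma>))"
proof -
  have "\<mu> X \<le> hausdorff_measure \<gamma> (\<Union>c\<in>Y. ball c R \<inter> C)"
    using cover by (intro hausdorff_measure_mono) auto
  also have "\<dots> \<le> (\<Sum>c\<in>Y. \<mu> (ball c R))"
    by (rule hausdorff_measure_UN_le[OF Y(1)])
  also have "\<dots> \<le> (\<Sum>c\<in>Y. ennreal (c2 * R powr \<gamma>))"
    using Y R by (intro sum_mono measure_ball_le) auto
  also have "\<dots> = ennreal (real (card Y) * (c2 * R powr \<gamma>))"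
    using c2_pos by (simp add: ennreal_mult ennreal_of_nat_eq_real_of_nat)
  finally show ?thesis .
qed

lemma card_separated_le:
  assumes S: "finite S" "S \<subseteq> C"
    and sep: "\<And>c c'. c \<in> S \<Longrightarrow> c' \<in> S \<Longrightarrow> c \<noteq> c' \<Longrightarrow> \<sigma> \<le> \<bar>c - c'\<bar>"
    and \<sigma>: "0 < \<sigma>" "\<sigma> / 4 < r0" and z: "z \<in> C" and R: "0 < R" "R < r0"
    and inside: "\<And>c. c \<in> S \<Longrightarrow> \<bar>c - z\<bar> + \<sigma> / 4 \<le> R"
  shows "real (card S) \<le> c2 / c1 * (4 * R / \<sigma>) powr \<gamma>"
proof -
  have "ennreal (real (card S) * (c1 * (\<sigma> / 4) powr \<gamma>)) \<le> \<mu> (\<Union>c\<in>S. ball c (\<sigma> / 4))"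
    using \<sigma> by (intro card_mult_le_measure_UN_balls[OF S sep]) auto
  also have "\<dots> \<le> \<mu> (ball z R)"
  proof (intro hausdorff_measure_mono Int_mono UN_least subsetI order_refl)
    fix c x assume "c \<in> S" "x \<in> ball c (\<sigma> / 4)"
    then show "x \<in> ball z R"
      using inside[of c] unfolding mem_ball dist_real_def by linarith
  qed
  also have "\<dots> \<le> ennreal (c2 * R powr \<gamma>)"
    using z R by (rule measure_ball_le)
  finally have "real (card S) * (c1 * (\<sigma> / 4) powr \<gamma>) \<le> c2 * R powr \<gamma>"
    using c2_pos by (simp add: ennreal_le_iff)
  also have "R powr \<gamma> = (4 * R / \<sigma>) powr \<gamma> * (\<sigma> / 4) powr \<gamma>"
    using \<sigma> R by (simp flip: powr_mult)
  finally have "(real (card S) * c1) * (\<sigma> / 4) powr \<gamma> \<le> (c2 * (4 * R / \<sigma>) powr \<gamma>) * (\<sigma> / 4) powr \<gamma>"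
    by (simp add: mult_ac)
  then have "real (card S) * c1 \<le> c2 * (4 * R / \<sigma>) powr \<gamma>"
    using \<sigma> by simp
  then show ?thesis
    using c1_pos by (simp add: field_simps)
qed

end

section \<open>Measure of \<open>LS\<^sub>k\<^sup>*\<close> near a point of \<open>C(b,D)\<close>\<close>

definition left_ends_near :: "nat \<Rightarrow> nat set \<Rightarrow> nat \<Rightarrow> real \<Rightarrow> real \<Rightarrow> real set" where
  "left_ends_near b D k x0 r = {y \<in> left_ends b D k.
     \<exists>x\<in>cantor_set b D. y \<le> x \<and> x \<le> y + 1 / real b ^ k \<and> dist x x0 < r}"

lemma ball_Int_cantor_set_subset_UN_balls:
  assumes "2 \<le> b" "D \<subseteq> {0..<b}" "D \<noteq> {}"
  shows "ball x0 r \<inter> cantor_set b D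
    \<subseteq> (\<Union>y\<in>left_ends_near b D k x0 r. ball (y + dl b D k) (2 / real b ^ k))"
proof
  fix x assume x: "x \<in> ball x0 r \<inter> cantor_set b D"
  then obtain y where y: "y \<in> left_ends b D k" "y \<le> x" "x \<le> y + 1 / real b ^ k"
    using cantor_set_near_left_end[OF assms(1,2), of x k] by auto
  then have "y \<in> left_ends_near b D k x0 r"
    using x unfolding left_ends_near_def by (auto simp: dist_commute)
  moreover define h where "h = 1 / real b ^ k"
  have "0 \<le> dl b D k" "dl b D k \<le> h" "0 < h"
    using assms by (auto simp: h_def intro: dl_nonneg dl_le_inverse_power)
  then have "x \<in> ball (y + dl b D k) (2 * h)"
    using y unfolding h_def[symmetric] mem_ball dist_real_def by arith
  ultimately show "x \<in> (\<Union>y\<in>left_ends_near b D k x0 r. ball (y + dl b D k) (2 / real b ^ k))"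
    by (simp add: h_def) blast
qed

locale ahlfors_regular_cantor = ahlfors_regular "cantor_set b D" \<gamma> r0 c1 c2
  for b :: nat and D :: "nat set" and \<gamma> r0 c1 c2 :: real +
  assumes b_ge_2: "2 \<le> b" and D_subset: "D \<subseteq> {0..<b}" and card_D_ge_2: "2 \<le> card D"
begin

lemma finite_D: "finite D"
  using D_subset finite_subset by blast

lemma D_ne: "D \<noteq> {}"
  using card_D_ge_2 by auto

lemma card_left_ends_near_ge:
  assumes x0: "x0 \<in> cantor_set b D" and r: "0 < r" "r < r0" and R: "2 / real b ^ k < r0"
  shows "c1 / c2 * (r * real b ^ k / 2) powr \<gamma> \<le> real (card (left_ends_near b D k x0 r))"
proof -
  define Y where "Y = left_ends_near b D k x0 r"
  define R where "R = 2 / real b ^ k"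
  have R_pos: "0 < R"
    using b_ge_2 by (simp add: R_def)
  have cover: "ball x0 r \<inter> cantor_set b D \<subseteq> (\<Union>c\<in>(\<lambda>y. y + dl b D k) ` Y. ball c R)"
    using ball_Int_cantor_set_subset_UN_balls[OF b_ge_2 D_subset D_ne] by (simp add: Y_def R_def)
  have "finite Y"
    unfolding Y_def left_ends_near_def using finite_left_ends[OF finite_D] by auto
  moreover have "(\<lambda>y. y + dl b D k) ` Y \<subseteq> cantor_set b D"
    unfolding Y_def left_ends_near_def
    using left_ends_plus_dl_in_cantor_set[OF b_ge_2 D_ne finite_D] by auto
  ultimately have "\<mu> (ball x0 r) \<le> ennreal (real (card ((\<lambda>y. y + dl b D k) ` Y)) * (c2 * R powr \<gamma>))"
    using R_pos R by (intro measure_le_card_mult cover) (auto simp: R_def)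
  also have "\<dots> \<le> ennreal (real (card Y) * (c2 * R powr \<gamma>))"
    using c2_pos card_image_le[OF \<open>finite Y\<close>] by (intro ennreal_leI mult_right_mono) auto
  finally have "ennreal (c1 * r powr \<gamma>) \<le> ennreal (real (card Y) * (c2 * R powr \<gamma>))"
    using measure_ball_ge[OF x0 r] by (rule order_trans[rotated])
  then have "c1 * r powr \<gamma> \<le> real (card Y) * (c2 * R powr \<gamma>)"
    using c2_pos by (simp add: ennreal_le_iff)
  also have "r powr \<gamma> = (r * real b ^ k / 2) powr \<gamma> * R powr \<gamma>"
    using r b_ge_2 by (simp add: R_def flip: powr_mult)
  finally have "(c1 / c2 * (r * real b ^ k / 2) powr \<gamma>) * (c2 * R powr \<gamma>) \<le> real (card Y) * (c2 * R powr \<gamma>)"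
    using c2_pos by (simp add: mult_ac)
  then show ?thesis
    using c2_pos R_pos by (simp add: Y_def pos_divide_le_eq)
qed

lemma card_left_ends_near_le_measure:
  assumes r: "0 < r" and small: "1 / real b ^ k < r / 4" and \<rho>: "0 < \<rho>" "\<rho> \<le> 1 / real b ^ Suc k / 2"
    and \<rho>_r0: "\<rho> < r0"
  shows "ennreal (real (card (left_ends_near b D k x0 (r / 2))) * (c1 * (\<rho> / 2) powr \<gamma>))
    \<le> \<mu> (ball x0 r \<inter> (\<Union>c\<in>star_centres b D (Suc k). ball c \<rho>))"
proof -
  define Y where "Y = left_ends_near b D k x0 (r / 2)"
  define h where "h = 1 / real b ^ Suc k"
  have h_pos: "0 < h"
    using b_ge_2 by (simp add: h_def)
  have \<rho>_h: "\<rho> \<le> h / 2"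
    using \<rho>(2) by (simp add: h_def)
  obtain d where d: "d \<in> D" "d \<noteq> Min D"
    using card_D_ge_2 by (metis Diff_iff card_le_Suc0_iff_eq finite_D not_less_eq_eq numeral_2_eq_2 Min_in D_ne)
  \<comment> \<open>each interval at \<open>y \<in> Y\<close> has the child with first new digit \<open>d \<noteq> Min D\<close>, whose centre lies in \<open>L\<^sup>*\<close>\<close>
  define Q where "Q = (\<lambda>y. y + real d / real b ^ Suc k + dl b D (Suc k)) ` Y"
  have card_Q: "card Q = card Y"
    unfolding Q_def by (rule card_image) (auto simp: inj_on_def)
  have Q_star: "Q \<subseteq> star_centres b D (Suc k)"
    unfolding Q_def Y_def left_ends_near_def star_centres_def
    using left_ends_Suc_in_left_ends_star[OF b_ge_2 D_subset _ d] by auto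
  have "ennreal (real (card Q) * (c1 * (\<rho> / 2) powr \<gamma>)) \<le> \<mu> (\<Union>c\<in>Q. ball c (\<rho> / 2))"
  proof (rule card_mult_le_measure_UN_balls)
    show "finite Q"
      using Q_star finite_star_centres[OF finite_D] by (rule finite_subset)
    show "Q \<subseteq> cantor_set b D"
      using Q_star star_centres_subset_cantor_set[OF b_ge_2 D_ne finite_D] by blast
    show "h \<le> \<bar>c - c'\<bar>" if "c \<in> Q" "c' \<in> Q" "c \<noteq> c'" for c c'
      using star_centres_separated[of b c D "Suc k" c'] that Q_star b_ge_2 by (auto simp: h_def)
  qed (use \<rho>(1) \<rho>_h \<rho>_r0 in auto)
  also have "\<dots> \<le> \<mu> (ball x0 r \<inter> (\<Union>c\<in>star_centres b D (Suc k). ball c \<rho>))"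
  proof (intro hausdorff_measure_mono Int_mono UN_least order_refl)
    fix c assume "c \<in> Q"
    then obtain y where y: "y \<in> Y" "c = y + real d / real b ^ Suc k + dl b D (Suc k)"
      unfolding Q_def by auto
    obtain x where x: "y \<le> x" "x \<le> y + 1 / real b ^ k" "dist x x0 < r / 2"
      using y(1) unfolding Y_def left_ends_near_def by auto
    have "y \<le> c" "c \<le> y + 1 / real b ^ k"
      using child_offset_bounds[OF b_ge_2 D_subset d(1), of k] y(2) by auto
    moreover have "h \<le> 1 / real b ^ k"
      unfolding h_def using b_ge_2 by (intro inverse_power_antimono) auto
    ultimately have "ball c (\<rho> / 2) \<subseteq> ball x0 r"
      using x small \<rho>(1) \<rho>_h h_pos unfolding subset_iff mem_ball dist_real_def by (intro allI impI) arith
    moreover have "ball c (\<rho> / 2) \<subseteq> ball c \<rho>"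
      using \<rho> by auto
    ultimately show "ball c (\<rho> / 2) \<subseteq> ball x0 r \<inter> (\<Union>c\<in>star_centres b D (Suc k). ball c \<rho>)"
      using Q_star \<open>c \<in> Q\<close> by blast
  qed
  finally show ?thesis
    by (simp add: card_Q Y_def)
qed

lemma measure_Int_star_balls_ge:
  assumes x0: "x0 \<in> cantor_set b D" and r: "0 < r" "2 * r < r0"
    and small: "1 / real b ^ k < r / 4" and \<rho>: "0 < \<rho>" "\<rho> \<le> 1 / real b ^ Suc k / 2"
  shows "ennreal (c1\<^sup>2 / c2 * (r * \<rho> * real b ^ k / 8) powr \<gamma>)
    \<le> \<mu> (ball x0 r \<inter> (\<Union>c\<in>star_centres b D (Suc k). ball c \<rho>))"
proof -
  define N where "N = real (card (left_ends_near b D k x0 (r / 2)))"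
  define h where "h = 1 / real b ^ k"
  define h' where "h' = 1 / real b ^ Suc k"
  have "h' \<le> h"
    unfolding h_def h'_def using b_ge_2 by (intro inverse_power_antimono) auto
  then have \<rho>_r0: "\<rho> < r0"
    using \<rho>(2) small r unfolding h_def[symmetric] h'_def[symmetric] by linarith
  have "c1 / c2 * (r / 2 * real b ^ k / 2) powr \<gamma> \<le> N"
    unfolding N_def using x0 r small by (intro card_left_ends_near_ge) auto
  then have "c1 / c2 * (r / 2 * real b ^ k / 2) powr \<gamma> * (c1 * (\<rho> / 2) powr \<gamma>) \<le> N * (c1 * (\<rho> / 2) powr \<gamma>)"
    using c1_pos by (intro mult_right_mono) auto
  moreover have "c1 / c2 * (r / 2 * real b ^ k / 2) powr \<gamma> * (c1 * (\<rho> / 2) powr \<gamma>)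
      = c1\<^sup>2 / c2 * (r * \<rho> * real b ^ k / 8) powr \<gamma>"
  proof -
    have "(r / 2 * real b ^ k / 2) powr \<gamma> * (\<rho> / 2) powr \<gamma> = (r * \<rho> * real b ^ k / 8) powr \<gamma>"
      using r \<rho> by (simp add: powr_mult[symmetric] mult_ac)
    then show ?thesis
      by (simp add: power2_eq_square field_simps)
  qed
  ultimately have "ennreal (c1\<^sup>2 / c2 * (r * \<rho> * real b ^ k / 8) powr \<gamma>) \<le> ennreal (N * (c1 * (\<rho> / 2) powr \<gamma>))"
    by (intro ennreal_leI) (simp only:)
  also have "\<dots> \<le> \<mu> (ball x0 r \<inter> (\<Union>c\<in>star_centres b D (Suc k). ball c \<rho>))"
    unfolding N_def using r(1) small \<rho> \<rho>_r0 by (rule card_left_ends_near_le_measure)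
  finally show ?thesis .
qed

lemma card_star_centres_near_ball_le:
  assumes x0: "x0 \<in> cantor_set b D" and r: "0 < r" "2 * r < r0"
    and small: "1 / real b ^ j < r / 4" and \<rho>j: "\<rho>j \<le> 1 / real b ^ j / 2"
  shows "real (card {c \<in> star_centres b D j. \<bar>c - x0\<bar> < r + \<rho>j}) \<le> c2 / c1 * (8 * r * real b ^ j) powr \<gamma>"
proof -
  define h where "h = 1 / real b ^ j"
  have h: "0 < h" "h < r / 4" "\<rho>j \<le> h / 2"
    using b_ge_2 small \<rho>j by (simp_all add: h_def)
  have "real (card {c \<in> star_centres b D j. \<bar>c - x0\<bar> < r + \<rho>j}) \<le> c2 / c1 * (4 * (2 * r) / h) powr \<gamma>"
  proof (rule card_separated_le[OF _ _ _ _ _ x0])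
    show "finite {c \<in> star_centres b D j. \<bar>c - x0\<bar> < r + \<rho>j}"
      using finite_star_centres[OF finite_D] by simp
    show "{c \<in> star_centres b D j. \<bar>c - x0\<bar> < r + \<rho>j} \<subseteq> cantor_set b D"
      using star_centres_subset_cantor_set[OF b_ge_2 D_ne finite_D] by blast
    show "h \<le> \<bar>c - c'\<bar>" if "c \<in> {c \<in> star_centres b D j. \<bar>c - x0\<bar> < r + \<rho>j}"
      "c' \<in> {c \<in> star_centres b D j. \<bar>c - x0\<bar> < r + \<rho>j}" "c \<noteq> c'" for c c'
      using that star_centres_separated[of b c D j c'] b_ge_2 by (simp add: h_def)
    show "\<bar>c - x0\<bar> + h / 4 \<le> 2 * r" if "c \<in> {c \<in> star_centres b D j. \<bar>c - x0\<bar> < r + \<rho>j}" for c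
      using that h by simp
  qed (use h r in auto)
  also have "4 * (2 * r) / h = 8 * r * real b ^ j"
    by (simp add: h_def)
  finally show ?thesis .
qed

lemma card_star_centres_near_le:
  assumes ij: "1 \<le> j" "j < i" and c': "c' \<in> star_centres b D j"
    and \<rho>i: "\<rho>i \<le> 1 / real b ^ i / 2" and \<rho>j: "0 < \<rho>j" "3 * \<rho>j < r0"
  shows "real (card {c \<in> star_centres b D i. \<bar>c - c'\<bar> < \<rho>i + \<rho>j})
    \<le> c2 / c1 * (12 * \<rho>j * real b ^ i) powr \<gamma>"
proof (cases "{c \<in> star_centres b D i. \<bar>c - c'\<bar> < \<rho>i + \<rho>j} = {}")
  case True
  then show ?thesis
    using c1_pos c2_pos by (simp only: card.empty of_nat_0) simp
next
  case False
  define h where "h = 1 / real b ^ i"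
  have h_pos: "0 < h"
    using b_ge_2 by (simp add: h_def)
  have \<rho>i_h: "\<rho>i \<le> h / 2"
    using \<rho>i by (simp add: h_def)
  obtain c0 where "c0 \<in> star_centres b D i" "\<bar>c0 - c'\<bar> < \<rho>i + \<rho>j"
    using False by auto
  then have "h \<le> \<bar>c0 - c'\<bar>"
    unfolding h_def using star_centres_separated_levels[OF b_ge_2 ij] c' by blast
  \<comment> \<open>so the balls of radius \<open>h / 4\<close> about the counted centres fit into \<open>ball c' (3 * \<rho>j)\<close>\<close>
  then have h_\<rho>j: "h < 2 * \<rho>j"
    using \<open>\<bar>c0 - c'\<bar> < \<rho>i + \<rho>j\<close> \<rho>i_h by linarith
  have "real (card {c \<in> star_centres b D i. \<bar>c - c'\<bar> < \<rho>i + \<rho>j}) \<le> c2 / c1 * (4 * (3 * \<rho>j) / h) powr \<gamma>"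
  proof (rule card_separated_le)
    show "finite {c \<in> star_centres b D i. \<bar>c - c'\<bar> < \<rho>i + \<rho>j}"
      using finite_star_centres[OF finite_D] by simp
    show "{c \<in> star_centres b D i. \<bar>c - c'\<bar> < \<rho>i + \<rho>j} \<subseteq> cantor_set b D"
      using star_centres_subset_cantor_set[OF b_ge_2 D_ne finite_D] by blast
    show "c' \<in> cantor_set b D"
      using c' star_centres_subset_cantor_set[OF b_ge_2 D_ne finite_D] by blast
    show "h \<le> \<bar>c - c''\<bar>" if "c \<in> {c \<in> star_centres b D i. \<bar>c - c'\<bar> < \<rho>i + \<rho>j}"
      "c'' \<in> {c \<in> star_centres b D i. \<bar>c - c'\<bar> < \<rho>i + \<rho>j}" "c \<noteq> c''" for c c''
      using that star_centres_separated[of b c D i c''] b_ge_2 by (simp add: h_def)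
    show "\<bar>c - c'\<bar> + h / 4 \<le> 3 * \<rho>j" if "c \<in> {c \<in> star_centres b D i. \<bar>c - c'\<bar> < \<rho>i + \<rho>j}" for c
      using that \<rho>i_h h_\<rho>j by auto
  qed (use h_pos h_\<rho>j \<rho>j in auto)
  also have "4 * (3 * \<rho>j) / h = 12 * \<rho>j * real b ^ i"
    by (simp add: h_def)
  finally show ?thesis .
qed

lemma measure_Int_Int_star_balls_le:
  assumes x0: "x0 \<in> cantor_set b D" and r: "0 < r" "2 * r < r0"
    and ij: "1 \<le> j" "j < i" and small: "1 / real b ^ j < r / 4"
    and \<rho>i: "0 < \<rho>i" "\<rho>i \<le> 1 / real b ^ i / 2" and \<rho>j: "0 < \<rho>j" "\<rho>j \<le> 1 / real b ^ j / 2"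
  shows "\<mu> ((ball x0 r \<inter> (\<Union>c\<in>star_centres b D i. ball c \<rho>i)) \<inter> (ball x0 r \<inter> (\<Union>c\<in>star_centres b D j. ball c \<rho>j)))
    \<le> ennreal (c2 ^ 3 / c1\<^sup>2 * (96 * r * \<rho>i * \<rho>j * real b ^ i * real b ^ j) powr \<gamma>)"
proof -
  define h where "h = 1 / real b ^ j"
  have h: "0 < h" "h < r / 4" "\<rho>j \<le> h / 2"
    using b_ge_2 small \<rho>j by (simp_all add: h_def)
  have "1 / real b ^ i \<le> h"
    unfolding h_def using b_ge_2 ij by (intro inverse_power_antimono) auto
  then have \<rho>i_r0: "\<rho>i < r0"
    using \<rho>i(2) h r by (simp add: field_simps)
  define N where "N = {c' \<in> star_centres b D j. \<bar>c' - x0\<bar> < r + \<rho>j}"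
  define S where "S c' = {c \<in> star_centres b D i. \<bar>c - c'\<bar> < \<rho>i + \<rho>j}" for c'
  define U where "U = (\<Union>c'\<in>N. S c')"
  have "finite N"
    unfolding N_def using finite_star_centres[OF finite_D] by simp
  have card_N: "real (card N) \<le> c2 / c1 * (8 * r * real b ^ j) powr \<gamma>"
    unfolding N_def using x0 r small \<rho>j(2) by (rule card_star_centres_near_ball_le)
  have card_S: "real (card (S c')) \<le> c2 / c1 * (12 * \<rho>j * real b ^ i) powr \<gamma>" if "c' \<in> N" for c'
    unfolding S_def using that h r \<rho>i \<rho>j
    by (intro card_star_centres_near_le[OF ij]) (auto simp: N_def)
  have "real (card U) \<le> (\<Sum>c'\<in>N. real (card (S c')))"
    unfolding U_def using card_UN_le[OF \<open>finite N\<close>, of S] by (simp flip: of_nat_sum)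
  also have "\<dots> \<le> real (card N) * (c2 / c1 * (12 * \<rho>j * real b ^ i) powr \<gamma>)"
    using sum_mono[OF card_S] by simp
  also have "\<dots> \<le> c2 / c1 * (8 * r * real b ^ j) powr \<gamma> * (c2 / c1 * (12 * \<rho>j * real b ^ i) powr \<gamma>)"
    using card_N c1_pos c2_pos by (intro mult_right_mono) auto
  finally have card_U: "real (card U) \<le> \<dots>" .
  have "\<mu> ((ball x0 r \<inter> (\<Union>c\<in>star_centres b D i. ball c \<rho>i)) \<inter> (ball x0 r \<inter> (\<Union>c\<in>star_centres b D j. ball c \<rho>j)))
      \<le> ennreal (real (card U) * (c2 * \<rho>i powr \<gamma>))"
  proof (rule measure_le_card_mult)
    show "finite U" "U \<subseteq> cantor_set b D"
      unfolding U_def S_def using \<open>finite N\<close> finite_star_centres[OF finite_D]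
        star_centres_subset_cantor_set[OF b_ge_2 D_ne finite_D] by auto
    show "(ball x0 r \<inter> (\<Union>c\<in>star_centres b D i. ball c \<rho>i)) \<inter> (ball x0 r \<inter> (\<Union>c\<in>star_centres b D j. ball c \<rho>j))
        \<inter> cantor_set b D \<subseteq> (\<Union>c\<in>U. ball c \<rho>i)"
      unfolding U_def S_def N_def by (force simp: dist_real_def)
  qed (use \<rho>i \<rho>i_r0 in auto)
  also have "\<dots> \<le> ennreal (c2 ^ 3 / c1\<^sup>2 * (96 * r * \<rho>i * \<rho>j * real b ^ i * real b ^ j) powr \<gamma>)"
  proof (rule ennreal_leI)
    have "(8 * r * real b ^ j) powr \<gamma> * (12 * \<rho>j * real b ^ i) powr \<gamma> * \<rho>i powr \<gamma>
        = (96 * r * \<rho>i * \<rho>j * real b ^ i * real b ^ j) powr \<gamma>"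
      using r \<rho>i \<rho>j by (simp add: powr_mult[symmetric] mult_ac)
    then show "real (card U) * (c2 * \<rho>i powr \<gamma>) \<le> c2 ^ 3 / c1\<^sup>2 * (96 * r * \<rho>i * \<rho>j * real b ^ i * real b ^ j) powr \<gamma>"
      using mult_right_mono[OF card_U, of "c2 * \<rho>i powr \<gamma>"] c2_pos
      by (simp add: power2_eq_square power3_eq_cube field_simps)
  qed
  finally show ?thesis .
qed

lemma measure_Int_star_balls_le_product:
  assumes x0: "x0 \<in> cantor_set b D" and r: "0 < r" "2 * r < r0"
    and ij: "j < i" and small: "1 / real b ^ j < r / 4"
    and \<rho>i: "\<rho>i \<le> 1 / real b ^ Suc i / 2" and \<rho>j: "\<rho>j \<le> 1 / real b ^ Suc j / 2"
  defines "Si \<equiv> ball x0 r \<inter> (\<Union>c\<in>star_centres b D (Suc i). ball c \<rho>i)"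
    and "Sj \<equiv> ball x0 r \<inter> (\<Union>c\<in>star_centres b D (Suc j). ball c \<rho>j)"
  shows "\<mu> (Si \<inter> Sj) \<le> ennreal ((c2 / c1) ^ 6 * (6144 * (real b)\<^sup>2) powr \<gamma>) / \<mu> (ball x0 r) * \<mu> Si * \<mu> Sj"
proof (cases "0 < \<rho>i \<and> 0 < \<rho>j")
  case False
  then have "Si \<inter> Sj = {}"
    unfolding Si_def Sj_def by (auto simp: not_less ball_empty)
  then show ?thesis
    by simp
next
  case True
  define K where "K = (c2 / c1) ^ 6 * (6144 * (real b)\<^sup>2) powr \<gamma>"
  define Li where "Li = c1\<^sup>2 / c2 * (r * \<rho>i * real b ^ i / 8) powr \<gamma>"
  define Lj where "Lj = c1\<^sup>2 / c2 * (r * \<rho>j * real b ^ j / 8) powr \<gamma>"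
  have small_i: "1 / real b ^ i < r / 4" and small_Suc_j: "1 / real b ^ Suc j < r / 4"
    using small inverse_power_antimono[of b j i] inverse_power_antimono[of b j "Suc j"] b_ge_2 ij by auto
  have Li: "ennreal Li \<le> \<mu> Si"
    unfolding Li_def Si_def using x0 r small_i \<rho>i True
    by (intro measure_Int_star_balls_ge) auto
  have Lj: "ennreal Lj \<le> \<mu> Sj"
    unfolding Lj_def Sj_def using x0 r small \<rho>j True
    by (intro measure_Int_star_balls_ge) auto
  obtain m where m_eq: "\<mu> (ball x0 r) = ennreal m" and m: "c1 * r powr \<gamma> \<le> m" "m \<le> c2 * r powr \<gamma>"
    using measure_ball_eq_ennreal[OF x0 r(1)] r by auto
  then have "0 < m"
    using c1_pos r by (smt (verit) mult_pos_pos powr_gt_zero)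
  have nonneg: "0 \<le> K" "0 \<le> Li" "0 \<le> Lj"
    unfolding K_def Li_def Lj_def using c1_pos c2_pos by auto
  have "\<mu> (Si \<inter> Sj) \<le> ennreal (c2 ^ 3 / c1\<^sup>2 * (96 * r * \<rho>i * \<rho>j * real b ^ Suc i * real b ^ Suc j) powr \<gamma>)"
    unfolding Si_def Sj_def using x0 r ij small_Suc_j \<rho>i \<rho>j True
    by (intro measure_Int_Int_star_balls_le) auto
  also have "c2 ^ 3 / c1\<^sup>2 * (96 * r * \<rho>i * \<rho>j * real b ^ Suc i * real b ^ Suc j) powr \<gamma>
      = K / (c2 * r powr \<gamma>) * Li * Lj"
  proof -
    have "(96 * r * \<rho>i * \<rho>j * real b ^ Suc i * real b ^ Suc j) powr \<gamma> * r powr \<gamma>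
        = (6144 * (real b)\<^sup>2) powr \<gamma> * (r * \<rho>i * real b ^ i / 8) powr \<gamma> * (r * \<rho>j * real b ^ j / 8) powr \<gamma>"
      using r True by (simp add: powr_mult[symmetric] power2_eq_square mult_ac)
    then show ?thesis
      unfolding K_def Li_def Lj_def using c1_pos c2_pos r
      by (simp add: field_simps eval_nat_numeral)
  qed
  also have "ennreal (K / (c2 * r powr \<gamma>) * Li * Lj) \<le> ennreal (K / m * Li * Lj)"
    using m(2) \<open>0 < m\<close> nonneg by (intro ennreal_leI mult_right_mono divide_left_mono) auto
  also have "\<dots> \<le> ennreal K / ennreal m * \<mu> Si * \<mu> Sj"
    using Li Lj \<open>0 < m\<close> nonneg by (intro ennreal_divide_mult_mult_le)
  finally show ?thesis
    unfolding K_def m_eq .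
qed
lemma measure_Int_LS_star_le_product:
  assumes x0: "x0 \<in> cantor_set b D" and r: "0 < r" "2 * r < r0"
    and small: "1 / real b ^ t < r / 4" and tji: "t < j" "j < i"
    and radius_i: "psiA a \<psi> i - dl b D i \<le> 1 / real b ^ i / 2"
    and radius_j: "psiA a \<psi> j - dl b D j \<le> 1 / real b ^ j / 2"
  shows "\<mu> ((ball x0 r \<inter> LS_star b D a \<psi> i) \<inter> (ball x0 r \<inter> LS_star b D a \<psi> j))
    \<le> ennreal ((c2 / c1) ^ 6 * (6144 * (real b)\<^sup>2) powr \<gamma>) / \<mu> (ball x0 r)
       * \<mu> (ball x0 r \<inter> LS_star b D a \<psi> i) * \<mu> (ball x0 r \<inter> LS_star b D a \<psi> j)"
proof -
  obtain j' where j': "j = Suc j'"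
    using tji by (cases j) auto
  obtain i' where i': "i = Suc i'"
    using tji by (cases i) auto
  have "1 / real b ^ j' \<le> 1 / real b ^ t"
    using tji b_ge_2 by (intro inverse_power_antimono) (auto simp: j')
  then have "1 / real b ^ j' < r / 4"
    using small by linarith
  then show ?thesis
    unfolding LS_star_eq i' j'
    using measure_Int_star_balls_le_product[OF x0 r] tji radius_i radius_j by (simp only: i' j' Suc_less_eq)
qed

end

theorem lemma4p3:
  fixes b :: nat and D :: "nat set" and a :: "nat \<Rightarrow> nat" and \<psi> :: "nat \<Rightarrow> real"
    and r0 :: real and x0 :: real and r :: real
  defines "\<gamma> \<equiv> ln (real (card D)) / ln (real b)"
  defines "\<mu> \<equiv> (\<lambda>X. hausdorff_measure \<gamma> (X \<inter> cantor_set b D))"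
  defines "I \<equiv> {i. \<exists>n\<ge>1. a n = i}"
  assumes b3: "b \<ge> 3"
    and D_sub: "D \<subseteq> {0..<b}" and D_card: "2 \<le> card D" "card D \<le> b - 1"
    and r0_pos: "r0 > 0"
    and ahlfors: "\<exists>c1 c2. 0 < c1 \<and> 0 < c2 \<and> (\<forall>x \<in> cantor_set b D. \<forall>\<rho>. 0 < \<rho> \<and> \<rho> < r0 \<longrightarrow>
                   ennreal (c1 * \<rho> powr \<gamma>) \<le> \<mu> (ball x \<rho>) \<and> \<mu> (ball x \<rho>) \<le> ennreal (c2 * \<rho> powr \<gamma>))"
    and a_pos: "\<forall>n\<ge>1. a n \<ge> 1"
    and a_mono: "\<forall>m n. 1 \<le> m \<and> m \<le> n \<longrightarrow> a m \<le> a n"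
    and a_unbdd: "\<forall>M. \<exists>n\<ge>1. a n > M"
    and psi_pos: "\<forall>n\<ge>1. \<psi> n > 0"
    and psi_small: "\<forall>i\<in>I. psiA a \<psi> i \<le> (1 / real b ^ i) / 2"
    and x0C: "x0 \<in> cantor_set b D"
    and r_pos: "0 < r" and r_small: "r < r0 / 2"
  shows "\<exists>T::nat. \<forall>t0\<ge>T. 1 / real b ^ t0 < r \<longrightarrow>
           (\<exists>K>0. \<forall>i\<in>I. \<forall>j\<in>I. t0 < j \<and> j < i \<longrightarrow>
              \<mu> ((ball x0 r \<inter> LS_star b D a \<psi> i) \<inter> (ball x0 r \<inter> LS_star b D a \<psi> j))
                \<le> ennreal K / \<mu> (ball x0 r) * \<mu> (ball x0 r \<inter> LS_star b D a \<psi> i)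
                   * \<mu> (ball x0 r \<inter> LS_star b D a \<psi> j))"
proof -
  obtain c1 c2 where c: "0 < c1" "0 < c2" and regular: "\<forall>x \<in> cantor_set b D. \<forall>\<rho>. 0 < \<rho> \<and> \<rho> < r0 \<longrightarrow>
      ennreal (c1 * \<rho> powr \<gamma>) \<le> \<mu> (ball x \<rho>) \<and> \<mu> (ball x \<rho>) \<le> ennreal (c2 * \<rho> powr \<gamma>)"
    using ahlfors by blast
  interpret C: ahlfors_regular_cantor b D \<gamma> r0 c1 c2
    using b3 D_sub D_card c regular unfolding \<mu>_def by unfold_locales auto
  obtain T where T: "1 / real b ^ T < r / 4"
    using real_arch_pow_inv[of "r / 4" "1 / real b"] r_pos b3 by (auto simp: power_one_over)
  have radius: "psiA a \<psi> k - dl b D k \<le> 1 / real b ^ k / 2" if "k \<in> I" for k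
    using psi_small that dl_nonneg[of b D k] b3 by fastforce
  define K where "K = (c2 / c1) ^ 6 * (6144 * (real b)\<^sup>2) powr \<gamma>"
  show ?thesis
  proof (intro exI[of _ T] allI impI exI[of _ K] conjI ballI)
    show "0 < K"
      unfolding K_def using c b3 by simp
    fix t0 i j assume "T \<le> t0" "i \<in> I" "j \<in> I" "t0 < j \<and> j < i"
    moreover have "1 / real b ^ t0 < r / 4"
      using inverse_power_antimono[of b T t0] \<open>T \<le> t0\<close> T b3 by simp
    ultimately show "\<mu> ((ball x0 r \<inter> LS_star b D a \<psi> i) \<inter> (ball x0 r \<inter> LS_star b D a \<psi> j))
        \<le> ennreal K / \<mu> (ball x0 r) * \<mu> (ball x0 r \<inter> LS_star b D a \<psi> i) * \<mu> (ball x0 r \<inter> LS_star b D a \<psi> j)"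
      unfolding \<mu>_def K_def using r_small radius
      by (intro C.measure_Int_LS_star_le_product[OF x0C r_pos]) auto
  qed
qed

end
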